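(* Let $p\in[1,\infty)$, $w$ a weight sequence, and let $A\subset L_{p,w}$ be bounded in $\|\cdot\|_{p,w}$ and equinormed with respect to $\{\|\cdot\|_{p,w,i}\}_{i\in\mathbb{N}}$. Then $$\forall d>0\ \exists N\in\mathbb{N}\ \forall a\in A\ \forall n\ge N:\ |a_n|<d.$$
   Context: A weight sequence is a sequence $w=(w_i)$ of positive reals with $w_1=1\ge w_2\ge\dots$, $w_i\to0$, and $\sum_i w_i=+\infty$. For a real sequence $a$, $\|a\|_{p,w}=\sup_{\sigma}\big(\sum_{i=1}^\infty |a_{\sigma_i}|^p w_i\big)^{1/p}$ over all permutations $\sigma$ of $\mathbb{N}$, and $L_{p,w}$ is the set of real sequences with finite $\|\cdot\|_{p,w}$. For $i\in\mathbb{N}$, $\|a\|_{p,w,i}=\|(a_1,\dots,a_i,0,0,\dots)\|_{p,w}$. $A$ is equinormed if $\forall\varepsilon>0\ \exists i\ \forall a\in A:\ \|a\|_{p,w}\le\|a\|_{p,w,i}+\varepsilon$. *)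

theory Defs
  imports "HOL-Analysis.Analysis"
begin

text \<open>Sequences are functions nat => real, indexed from 0 (index 0 corresponds to
the paper's index 1).\<close>

definition weight_seq :: "(nat \<Rightarrow> real) \<Rightarrow> bool" where
  "weight_seq w \<longleftrightarrow> (\<forall>i. w i > 0) \<and> w 0 = 1 \<and> decseq w \<and> w \<longlonglongrightarrow> 0 \<and> \<not> summable w"

definition lorentz_psum :: "real \<Rightarrow> (nat \<Rightarrow> real) \<Rightarrow> (nat \<Rightarrow> real) \<Rightarrow> ennreal" where
  "lorentz_psum p w a = (SUP \<sigma>\<in>{\<sigma>. bij \<sigma>}. (\<Sum>i. ennreal (\<bar>a (\<sigma> i)\<bar> powr p * w i)))"

definition in_Lpw :: "real \<Rightarrow> (nat \<Rightarrow> real) \<Rightarrow> (nat \<Rightarrow> real) \<Rightarrow> bool" where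
  "in_Lpw p w a \<longleftrightarrow> lorentz_psum p w a < \<infinity>"

text \<open>The norm ||a||_{p,w} (meaningful for a in L_{p,w}, where the supremum is finite).\<close>
definition lorentz_norm :: "real \<Rightarrow> (nat \<Rightarrow> real) \<Rightarrow> (nat \<Rightarrow> real) \<Rightarrow> real" where
  "lorentz_norm p w a = (enn2real (lorentz_psum p w a)) powr (1 / p)"

definition trunc_seq :: "(nat \<Rightarrow> real) \<Rightarrow> nat \<Rightarrow> (nat \<Rightarrow> real)" where
  "trunc_seq a i = (\<lambda>n. if n < i then a n else 0)"

definition lorentz_norm_i :: "real \<Rightarrow> (nat \<Rightarrow> real) \<Rightarrow> nat \<Rightarrow> (nat \<Rightarrow> real) \<Rightarrow> real" where
  "lorentz_norm_i p w i a = lorentz_norm p w (trunc_seq a i)"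

definition equinormed :: "real \<Rightarrow> (nat \<Rightarrow> real) \<Rightarrow> (nat \<Rightarrow> real) set \<Rightarrow> bool" where
  "equinormed p w A \<longleftrightarrow>
     (\<forall>\<epsilon>>0. \<exists>i. \<forall>a\<in>A. lorentz_norm p w a \<le> lorentz_norm_i p w i a + \<epsilon>)"

end

theory Submission
  imports Defs
begin

(* Suppose |a n| >= d for some a in A and n >= i, and let M bound the norms on A.
   Because sum w diverges, there is K with (d/2)^p (w_0 + ... + w_(K-1)) > M^p, so in every
   rearrangement of the truncation of a to its first i entries one of the first K positions
   carries an entry below d/2.  Moving a n (which the truncation drops) into that position
   raises the weighted sum by at least c = (d^p - (d/2)^p) w_K, hence
   ||a||_(p,w,i)^p + c <= ||a||_(p,w)^p with c independent of a.  Equinormedness makes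
   ||a||_(p,w) - ||a||_(p,w,i) uniformly small, and uniform continuity of t^p on [0, M]
   turns this into ||a||_(p,w)^p < ||a||_(p,w,i)^p + c, a contradiction once i is large. *)

lemma lorentz_psum_upper:
  assumes "bij \<sigma>"
  shows "(\<Sum>k. ennreal (\<bar>a (\<sigma> k)\<bar> powr p * w k)) \<le> lorentz_psum p w a"
  unfolding lorentz_psum_def by (rule SUP_upper) (use assms in simp)

lemma lorentz_psum_mono:
  assumes p: "0 \<le> p" and w: "\<And>k. 0 \<le> w k" and le: "\<And>k. \<bar>b k\<bar> \<le> \<bar>a k\<bar>"
  shows "lorentz_psum p w b \<le> lorentz_psum p w a"
  unfolding lorentz_psum_def
proof (rule SUP_mono)
  fix \<sigma> :: "nat \<Rightarrow> nat" assume "\<sigma> \<in> {\<sigma>. bij \<sigma>}"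
  moreover have "(\<Sum>k. ennreal (\<bar>b (\<sigma> k)\<bar> powr p * w k)) \<le> (\<Sum>k. ennreal (\<bar>a (\<sigma> k)\<bar> powr p * w k))"
    using p w le by (intro suminf_le ennreal_leI mult_right_mono powr_mono2) (auto intro: summableI)
  ultimately show "\<exists>\<tau>\<in>{\<sigma>. bij \<sigma>}. (\<Sum>k. ennreal (\<bar>b (\<sigma> k)\<bar> powr p * w k))
                     \<le> (\<Sum>k. ennreal (\<bar>a (\<tau> k)\<bar> powr p * w k))"
    by blast
qed

lemma lorentz_psum_eq_norm_powr:
  assumes "lorentz_psum p w a \<noteq> \<infinity>" and "0 < p"
  shows "lorentz_psum p w a = ennreal (lorentz_norm p w a powr p)"
proof -
  have "lorentz_norm p w a powr p = enn2real (lorentz_psum p w a)"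
    unfolding lorentz_norm_def using assms(2) by (simp add: powr_powr)
  thus ?thesis using assms(1) by (simp add: ennreal_enn2real_if)
qed

lemma nonneg_not_summable_imp_partial_sum_gt:
  fixes w :: "nat \<Rightarrow> real"
  assumes "\<And>k. 0 \<le> w k" and "\<not> summable w"
  shows "\<exists>K. B < (\<Sum>k<K. w k)"
  using assms summableI_nonneg_bounded[of w B] by (meson not_less)

lemma lorentz_psum_bounded_imp_small_entry:
  assumes p: "0 \<le> p" and w: "\<And>k. 0 \<le> w k" and t: "0 \<le> t" and "bij \<sigma>"
    and Q: "0 \<le> Q" and bounded: "lorentz_psum p w a \<le> ennreal Q"
    and big: "Q < t powr p * (\<Sum>k<K. w k)"
  shows "\<exists>j<K. \<bar>a (\<sigma> j)\<bar> < t"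
proof (rule ccontr)
  assume "\<not> ?thesis"
  hence ge: "t \<le> \<bar>a (\<sigma> j)\<bar>" if "j < K" for j using that by (meson not_less)
  have "ennreal (t powr p * (\<Sum>k<K. w k)) = (\<Sum>k<K. ennreal (t powr p * w k))"
    using w by (simp add: sum_distrib_left)
  also have "\<dots> \<le> (\<Sum>k<K. ennreal (\<bar>a (\<sigma> k)\<bar> powr p * w k))"
    using ge w t p by (intro sum_mono ennreal_leI mult_right_mono powr_mono2) auto
  also have "\<dots> \<le> (\<Sum>k. ennreal (\<bar>a (\<sigma> k)\<bar> powr p * w k))"
    by (rule sum_le_suminf) (auto intro: summableI)
  also have "\<dots> \<le> ennreal Q"
    using lorentz_psum_upper[OF \<open>bij \<sigma>\<close>] bounded by (rule order_trans)
  finally have "ennreal (t powr p * (\<Sum>k<K. w k)) \<le> ennreal Q" .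
  moreover have "0 \<le> t powr p * (\<Sum>k<K. w k)" using w by (simp add: sum_nonneg)
  ultimately show False using big Q by simp
qed

lemma lorentz_series_move_entry_gain:
  fixes a b w :: "nat \<Rightarrow> real"
  assumes p: "0 \<le> p" and w: "\<And>k. 0 \<le> w k" and le: "\<And>k. \<bar>b k\<bar> \<le> \<bar>a k\<bar>"
    and bn: "b n = 0" and \<sigma>: "bij \<sigma>" and small: "\<bar>b (\<sigma> j)\<bar> \<le> \<bar>a n\<bar>"
  shows "(\<Sum>k. ennreal (\<bar>b (\<sigma> k)\<bar> powr p * w k))
           + ennreal ((\<bar>a n\<bar> powr p - \<bar>b (\<sigma> j)\<bar> powr p) * w j)
         \<le> lorentz_psum p w a"
proof -
  define m where "m = inv \<sigma> n"
  have \<sigma>m: "\<sigma> m = n" unfolding m_def using \<sigma> by (simp add: bij_is_surj surj_f_inv_f)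
  define \<tau> where "\<tau> = \<sigma> \<circ> Transposition.transpose j m"
  have \<tau>: "bij \<tau>" unfolding \<tau>_def using \<sigma> by (simp add: bij_comp bij_transpose)
  define D where "D = (\<bar>a n\<bar> powr p - \<bar>b (\<sigma> j)\<bar> powr p) * w j"
  have "\<bar>b (\<sigma> j)\<bar> powr p \<le> \<bar>a n\<bar> powr p" using small p by (intro powr_mono2) auto
  hence D: "0 \<le> D" unfolding D_def using w[of j] by simp
  \<comment> \<open>Exchanging the positions of j and m in \<sigma> moves a n to position j and
      only increases every other term, because b vanishes at n.\<close>
  have term_le: "ennreal (\<bar>b (\<sigma> k)\<bar> powr p * w k) + ennreal (if k = j then D else 0)
                  \<le> ennreal (\<bar>a (\<tau> k)\<bar> powr p * w k)" for k
  proof -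
    consider "k = j" | "k \<noteq> j" "k = m" | "k \<noteq> j" "k \<noteq> m" by blast
    thus ?thesis
    proof cases
      case 1
      hence "\<tau> k = n" using \<sigma>m by (simp add: \<tau>_def)
      thus ?thesis using 1 D w[of k] by (simp add: D_def algebra_simps flip: ennreal_plus)
    next
      case 2
      thus ?thesis using \<sigma>m bn by simp
    next
      case 3
      hence "\<tau> k = \<sigma> k" by (simp add: \<tau>_def transpose_apply_other)
      thus ?thesis using 3 le p w
        by (simp add: ennreal_leI mult_right_mono powr_mono2)
    qed
  qed
  have "(\<lambda>k. ennreal (if k = j then D else 0)) = (\<lambda>k. if k = j then ennreal D else 0)"
    by auto
  hence "(\<Sum>k. ennreal (if k = j then D else 0)) = ennreal D"
    using sums_single[of j "\<lambda>_. ennreal D"] by (simp add: sums_iff)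
  hence "(\<Sum>k. ennreal (\<bar>b (\<sigma> k)\<bar> powr p * w k)) + ennreal D
      = (\<Sum>k. ennreal (\<bar>b (\<sigma> k)\<bar> powr p * w k) + ennreal (if k = j then D else 0))"
    by (simp add: suminf_add[symmetric] summableI)
  also have "\<dots> \<le> (\<Sum>k. ennreal (\<bar>a (\<tau> k)\<bar> powr p * w k))"
    by (intro suminf_le term_le) (auto intro: summableI)
  also have "\<dots> \<le> lorentz_psum p w a"
    using \<tau> by (rule lorentz_psum_upper)
  finally show ?thesis unfolding D_def .
qed

lemma lorentz_psum_trunc_add_gap:
  fixes a w :: "nat \<Rightarrow> real"
  assumes p: "0 \<le> p" and w: "\<And>k. 0 \<le> w k" and dec: "decseq w"
    and t: "0 \<le> t" "t \<le> d" and ni: "i \<le> n" and an: "d \<le> \<bar>a n\<bar>"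
    and Q: "0 \<le> Q" and bounded: "lorentz_psum p w a \<le> ennreal Q"
    and big: "Q < t powr p * (\<Sum>k<K. w k)"
  shows "lorentz_psum p w (trunc_seq a i) + ennreal ((d powr p - t powr p) * w K)
         \<le> lorentz_psum p w a"
proof -
  define b where "b = trunc_seq a i"
  define c where "c = (d powr p - t powr p) * w K"
  have le: "\<bar>b k\<bar> \<le> \<bar>a k\<bar>" for k by (simp add: b_def trunc_seq_def)
  have bn: "b n = 0" using ni by (simp add: b_def trunc_seq_def)
  have b_bounded: "lorentz_psum p w b \<le> ennreal Q"
    using lorentz_psum_mono[OF p w le] bounded by (rule order_trans)
  have tp: "t powr p \<le> d powr p" using t p by (intro powr_mono2) auto
  have "(\<Sum>k. ennreal (\<bar>b (\<sigma> k)\<bar> powr p * w k)) + ennreal c \<le> lorentz_psum p w a"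
    if \<sigma>: "bij \<sigma>" for \<sigma>
  proof -
    obtain j where "j < K" and bj: "\<bar>b (\<sigma> j)\<bar> < t"
      using lorentz_psum_bounded_imp_small_entry[OF p w t(1) \<sigma> Q b_bounded big] by blast
    hence "w K \<le> w j" using dec by (simp add: decseq_def)
    moreover have "\<bar>b (\<sigma> j)\<bar> powr p \<le> t powr p" using bj p by (intro powr_mono2) auto
    moreover have "d powr p \<le> \<bar>a n\<bar> powr p" using an t p by (intro powr_mono2) auto
    ultimately have "c \<le> (\<bar>a n\<bar> powr p - \<bar>b (\<sigma> j)\<bar> powr p) * w j"
      unfolding c_def using tp w[of K]
      by (meson diff_mono diff_ge_0_iff_ge mult_mono order_trans)
    hence "(\<Sum>k. ennreal (\<bar>b (\<sigma> k)\<bar> powr p * w k)) + ennreal c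
         \<le> (\<Sum>k. ennreal (\<bar>b (\<sigma> k)\<bar> powr p * w k))
             + ennreal ((\<bar>a n\<bar> powr p - \<bar>b (\<sigma> j)\<bar> powr p) * w j)"
      by (intro add_left_mono ennreal_leI)
    also have "\<dots> \<le> lorentz_psum p w a"
      using bj t an
      by (intro lorentz_series_move_entry_gain[where b = b and a = a and n = n, OF p w le bn \<sigma>])
        auto
    finally show ?thesis .
  qed
  hence "(SUP \<sigma>\<in>{\<sigma>. bij \<sigma>}. (\<Sum>k. ennreal (\<bar>b (\<sigma> k)\<bar> powr p * w k)) + ennreal c)
         \<le> lorentz_psum p w a"
    by (intro SUP_least) auto
  moreover have "{\<sigma>::nat \<Rightarrow> nat. bij \<sigma>} \<noteq> {}" using bij_id by blast
  ultimately show ?thesis unfolding lorentz_psum_def[of p w b] b_def[symmetric] c_def[symmetric]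
    by (simp add: ennreal_SUP_add_left)
qed

lemma lorentz_norm_trunc_powr_add_gap:
  fixes a w :: "nat \<Rightarrow> real"
  assumes p: "0 < p" and w: "\<And>k. 0 \<le> w k" and dec: "decseq w"
    and a: "in_Lpw p w a" and M: "lorentz_norm p w a \<le> M"
    and t: "0 \<le> t" "t \<le> d" and ni: "i \<le> n" and an: "d \<le> \<bar>a n\<bar>"
    and big: "M powr p < t powr p * (\<Sum>k<K. w k)"
  shows "lorentz_norm_i p w i a powr p + (d powr p - t powr p) * w K \<le> lorentz_norm p w a powr p"
proof -
  define c where "c = (d powr p - t powr p) * w K"
  have c: "0 \<le> c" unfolding c_def using t p w[of K] by (simp add: powr_mono2)
  have fin: "lorentz_psum p w a \<noteq> \<infinity>" using a by (simp add: in_Lpw_def)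
  have Pa: "lorentz_psum p w a = ennreal (lorentz_norm p w a powr p)"
    using fin p by (rule lorentz_psum_eq_norm_powr)
  have "lorentz_norm p w a powr p \<le> M powr p"
    using M p by (intro powr_mono2) (auto simp: lorentz_norm_def)
  hence "lorentz_psum p w a \<le> ennreal (M powr p)" using Pa by (simp add: ennreal_leI)
  hence gap: "lorentz_psum p w (trunc_seq a i) + ennreal c \<le> lorentz_psum p w a"
    unfolding c_def using p w dec t ni an big
    by (intro lorentz_psum_trunc_add_gap) auto
  hence "lorentz_psum p w (trunc_seq a i) \<noteq> \<infinity>"
    using fin by (metis ennreal_add_eq_top infinity_ennreal_def top.extremum_uniqueI)
  hence "lorentz_psum p w (trunc_seq a i) = ennreal (lorentz_norm_i p w i a powr p)"
    unfolding lorentz_norm_i_def using p by (rule lorentz_psum_eq_norm_powr)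
  with gap Pa c show ?thesis
    by (simp add: c_def ennreal_le_iff flip: ennreal_plus)
qed

lemma powr_uniform_increment:
  fixes p c M :: real
  assumes p: "0 < p" and c: "0 < c"
  shows "\<exists>\<delta>>0. \<forall>x\<in>{0..M}. \<forall>y\<ge>0. x \<le> y + \<delta> \<longrightarrow> x powr p < y powr p + c"
proof -
  have "uniformly_continuous_on {0..M} (\<lambda>t::real. t powr p)"
    using p by (intro compact_uniformly_continuous continuous_on_powr' continuous_intros) auto
  then obtain \<delta> where \<delta>: "\<delta> > 0" and uc: "\<And>x y. x \<in> {0..M} \<Longrightarrow> y \<in> {0..M} \<Longrightarrow> dist y x < \<delta>
      \<Longrightarrow> dist (y powr p) (x powr p) < c"
    unfolding uniformly_continuous_on_def using c by metis
  have "x powr p < y powr p + c" if x: "x \<in> {0..M}" and y: "0 \<le> y" and xy: "x \<le> y + \<delta>/2" for x y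
  proof (cases "x \<le> y")
    case True
    hence "x powr p \<le> y powr p" using x p by (intro powr_mono2) auto
    thus ?thesis using c by simp
  next
    case False
    hence "dist (y powr p) (x powr p) < c" using x y xy \<delta> by (intro uc) (auto simp: dist_real_def)
    thus ?thesis by (simp add: dist_real_def)
  qed
  thus ?thesis using \<delta> by (intro exI[of _ "\<delta>/2"]) auto
qed

theorem mainTheorem9:
  fixes p :: real and w :: "nat \<Rightarrow> real" and A :: "(nat \<Rightarrow> real) set"
  assumes "1 \<le> p"
    and "weight_seq w"
    and "\<forall>a\<in>A. in_Lpw p w a"
    and "\<exists>M. \<forall>a\<in>A. lorentz_norm p w a \<le> M"
    and "equinormed p w A"
  shows "\<forall>d>0. \<exists>N. \<forall>a\<in>A. \<forall>n\<ge>N. \<bar>a n\<bar> < d"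
proof (intro allI impI)
  fix d :: real assume d: "0 < d"
  have p: "0 < p" using assms(1) by simp
  have wpos: "\<And>k. 0 < w k" and dec: "decseq w" and "\<not> summable w"
    using assms(2) unfolding weight_seq_def by auto
  obtain M where M: "\<And>a. a \<in> A \<Longrightarrow> lorentz_norm p w a \<le> M" using assms(4) by blast
  have dp: "0 < (d/2) powr p" "(d/2) powr p < d powr p" using d p by (auto intro: powr_less_mono2)
  obtain K where "M powr p / (d/2) powr p < (\<Sum>k<K. w k)"
    using nonneg_not_summable_imp_partial_sum_gt wpos \<open>\<not> summable w\<close> less_imp_le by metis
  hence big: "M powr p < (d/2) powr p * (\<Sum>k<K. w k)" using dp by (simp add: field_simps)
  define c where "c = (d powr p - (d/2) powr p) * w K"
  have "0 < c" unfolding c_def using dp wpos[of K] by simp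
  then obtain \<delta> where "\<delta> > 0"
    and increment: "\<forall>x\<in>{0..M}. \<forall>y\<ge>0. x \<le> y + \<delta> \<longrightarrow> x powr p < y powr p + c"
    using powr_uniform_increment p by blast
  then obtain i where i: "\<forall>a\<in>A. lorentz_norm p w a \<le> lorentz_norm_i p w i a + \<delta>"
    using assms(5) unfolding equinormed_def by blast
  have "\<bar>a n\<bar> < d" if a: "a \<in> A" and "i \<le> n" for a n
  proof (rule ccontr)
    assume "\<not> \<bar>a n\<bar> < d"
    hence "lorentz_norm_i p w i a powr p + c \<le> lorentz_norm p w a powr p"
      unfolding c_def using p wpos dec assms(3) M a d \<open>i \<le> n\<close> big
      by (intro lorentz_norm_trunc_powr_add_gap) (auto intro: less_imp_le)
    moreover have "lorentz_norm p w a powr p < lorentz_norm_i p w i a powr p + c"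
      using increment i M a by (simp add: lorentz_norm_i_def lorentz_norm_def)
    ultimately show False by simp
  qed
  thus "\<exists>N. \<forall>a\<in>A. \<forall>n\<ge>N. \<bar>a n\<bar> < d" by blast
qed

end
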